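(* Let $\alpha\in\mathbb R\setminus\{0\}$ and $\mathbf L=\mathbf a^2-\alpha^2\mathbf 1$ on $\mathcal H_a$. Define $\mathcal E^a_{\mathbf L}=\mathrm{Span}\{(\mathbf L^\dagger)^j|v\rangle\mid j\in\mathbb N,\ |v\rangle\in\ker\mathbf L\}$ and $\mathcal E^\sharp_{\mathbf L}=\mathrm{Span}\{(\mathbf L^\dagger)^j[\mathbf L,\mathbf L^\dagger]|v\rangle\mid j\in\mathbb N,\ |v\rangle\in\ker\mathbf L\}$. Then $\mathcal E^a_{\mathbf L}+\mathcal E^\sharp_{\mathbf L}$ is dense in $\mathcal H_a$.
   Context: $\mathcal H_a=L^2(\mathbb R,\mathbb C)$ with Fock basis $(|n\rangle)$, $\mathbf a=\frac1{\sqrt2}(x+\partial_x)$ the annihilation operator, $\mathbf a^\dagger$ the creation operator. $\ker\mathbf L$ is spanned by the coherent states $|\alpha\rangle,|-\alpha\rangle$, where $|z\rangle=e^{-|z|^2/2}\sum_n\frac{z^n}{\sqrt{n!}}|n\rangle$; these vectors lie in the domain of every polynomial in $\mathbf a,\mathbf a^\dagger$, so the expressions above are well defined, with $[\mathbf L,\mathbf L^\dagger]=\mathbf L\mathbf L^\dagger-\mathbf L^\dagger\mathbf L$. *)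

theory Defs
  imports Complex_Main
begin

text \<open>H_a = L^2(R) is represented, via the unitary Fock-basis isomorphism, by
  l^2(N, C): a vector is its sequence of Fock coefficients (n-th entry = coefficient of |n>).\<close>

definition ell2 :: "(nat \<Rightarrow> complex) set" where
  "ell2 = {f. summable (\<lambda>n. (cmod (f n))^2)}"

text \<open>Annihilation operator: a|n> = sqrt n |n-1>, i.e. (a f)_n = sqrt(n+1) f_(n+1).\<close>
definition ann :: "(nat \<Rightarrow> complex) \<Rightarrow> nat \<Rightarrow> complex" where
  "ann f n = complex_of_real (sqrt (real (Suc n))) * f (Suc n)"

text \<open>Creation operator: a^dag|n> = sqrt(n+1) |n+1>, i.e. (a^dag f)_n = sqrt n f_(n-1).\<close>
definition cre :: "(nat \<Rightarrow> complex) \<Rightarrow> nat \<Rightarrow> complex" where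
  "cre f n = (if n = 0 then 0 else complex_of_real (sqrt (real n)) * f (n - 1))"

definition Lop :: "real \<Rightarrow> (nat \<Rightarrow> complex) \<Rightarrow> nat \<Rightarrow> complex" where
  "Lop \<alpha> f = (\<lambda>n. ann (ann f) n - complex_of_real (\<alpha>^2) * f n)"

definition Ldag :: "real \<Rightarrow> (nat \<Rightarrow> complex) \<Rightarrow> nat \<Rightarrow> complex" where
  "Ldag \<alpha> f = (\<lambda>n. cre (cre f) n - complex_of_real (\<alpha>^2) * f n)"

definition commL :: "real \<Rightarrow> (nat \<Rightarrow> complex) \<Rightarrow> nat \<Rightarrow> complex" where
  "commL \<alpha> f = (\<lambda>n. Lop \<alpha> (Ldag \<alpha> f) n - Ldag \<alpha> (Lop \<alpha> f) n)"

definition kerL :: "real \<Rightarrow> (nat \<Rightarrow> complex) set" where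
  "kerL \<alpha> = {v \<in> ell2. Lop \<alpha> v = (\<lambda>_. 0)}"

definition cspan :: "(nat \<Rightarrow> complex) set \<Rightarrow> (nat \<Rightarrow> complex) set" where
  "cspan S = {x. \<exists>F c. finite F \<and> F \<subseteq> S \<and> x = (\<lambda>n. \<Sum>v\<in>F. c v * v n)}"

definition Ea :: "real \<Rightarrow> (nat \<Rightarrow> complex) set" where
  "Ea \<alpha> = cspan {(Ldag \<alpha> ^^ j) v | j v. v \<in> kerL \<alpha>}"

definition Esharp :: "real \<Rightarrow> (nat \<Rightarrow> complex) set" where
  "Esharp \<alpha> = cspan {(Ldag \<alpha> ^^ j) (commL \<alpha> v) | j v. v \<in> kerL \<alpha>}"

definition setsum_fun :: "(nat \<Rightarrow> complex) set \<Rightarrow> (nat \<Rightarrow> complex) set \<Rightarrow> (nat \<Rightarrow> complex) set" where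
  "setsum_fun A B = {(\<lambda>n. x n + y n) | x y. x \<in> A \<and> y \<in> B}"

definition dense_ell2 :: "(nat \<Rightarrow> complex) set \<Rightarrow> bool" where
  "dense_ell2 D \<longleftrightarrow> (\<forall>f\<in>ell2. \<forall>\<epsilon>>0. \<exists>g\<in>D.
      summable (\<lambda>n. (cmod (f n - g n))^2) \<and> (\<Sum>n. (cmod (f n - g n))^2) < \<epsilon>)"

end

theory Submission
  imports Defs "HOL-Library.Function_Algebras" "HOL-Analysis.Convex"
begin

text \<open>
  The commutator \<open>[L, L\<^sup>\<dagger>] = 4a\<^sup>\<dagger>a + 2\<close> is diagonal in the Fock basis, and
  the unnormalised coherent state \<open>c = e\<^bsup>\<alpha>a\<^sup>\<dagger>\<^esup>|0\<rangle> \<in> ker L\<close> satisfies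
  \<open>a c = \<alpha> c\<close>, so \<open>[L, L\<^sup>\<dagger>] c = 4\<alpha> a\<^sup>\<dagger>c + 2c\<close> and, as \<open>\<alpha> \<noteq> 0\<close>, \<open>a\<^sup>\<dagger>c\<close> lies in
  \<open>E\<^sup>a + E\<^sup>#\<close>. This subspace is \<open>L\<^sup>\<dagger>\<close>-invariant and \<open>(a\<^sup>\<dagger>)\<^sup>2 = L\<^sup>\<dagger> + \<alpha>\<^sup>2\<close>, so it
  contains every \<open>(a\<^sup>\<dagger>)\<^sup>k c\<close>. Finally \<open>e\<^bsup>-\<alpha>a\<^sup>\<dagger>\<^esup>(a\<^sup>\<dagger>)\<^sup>m c = (a\<^sup>\<dagger>)\<^sup>m|0\<rangle> = \<surd>m! |m\<rangle>\<close>,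
  and the partial sums of this exponential series converge in \<open>\<ell>\<^sup>2\<close>: the error of the
  \<open>N\<close>-th one in the coefficient of \<open>|n\<rangle>\<close> vanishes for \<open>n \<le> N\<close> and is bounded by the summable
  \<open>2\<^sup>m (8\<alpha>\<^sup>2)\<^bsup>n-m\<^esup> / (n-m)!\<close> otherwise. So every Fock vector, hence every
  \<open>\<ell>\<^sup>2\<close> vector, is a limit of elements of \<open>E\<^sup>a + E\<^sup>#\<close>.
\<close>

interpretation seq: module "\<lambda>c (f :: nat \<Rightarrow> complex) n. c * f n"
  by unfold_locales (auto simp: algebra_simps)

lemma sum_fun_apply: "sum f A x = (\<Sum>a\<in>A. f a x)"
  by (induction A rule: infinite_finite_induct) auto

lemma cspan_eq_span: "cspan S = seq.span S"
  unfolding cspan_def seq.span_explicit by (auto simp: sum_fun_apply fun_eq_iff)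

lemma setsum_fun_span: "setsum_fun (seq.span A) (seq.span B) = seq.span (A \<union> B)"
  unfolding setsum_fun_def seq.span_Un by (auto simp: plus_fun_def)

lemma span_lincomb:
  assumes "\<And>k. k \<in> K \<Longrightarrow> v k \<in> seq.span S"
  shows "(\<lambda>n. \<Sum>k\<in>K. c k * v k n) \<in> seq.span S"
proof -
  have "(\<Sum>k\<in>K. (\<lambda>n. c k * v k n)) \<in> seq.span S"
    using assms by (intro seq.span_sum seq.span_scale)
  then show ?thesis by (simp add: sum_fun_apply[abs_def])
qed

lemma span_scale_add:
  assumes "x \<in> seq.span S" "y \<in> seq.span S"
  shows "(\<lambda>n. a * x n + b * y n) \<in> seq.span S"
  using seq.span_add[OF seq.span_scale[OF assms(1)] seq.span_scale[OF assms(2)]]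
  by (simp add: plus_fun_def)

lemma span_invariant:
  assumes "module_hom s s T" "T ` S \<subseteq> S"
  shows "T ` module.span s S \<subseteq> module.span s S"
  using module_hom.span_image[OF assms(1)] module.span_mono[OF module_hom.axioms(1)[OF assms(1)] assms(2)]
  by simp

lemma truncation_sums:
  fixes a :: "nat \<Rightarrow> 'a::real_normed_vector"
  assumes "summable a"
  shows "(\<lambda>n. if M \<le> n then a n else 0) sums (suminf a - sum a {..<M})"
proof -
  have "(\<lambda>n. a n - (if n \<in> {..<M} then a n else 0)) sums (suminf a - sum a {..<M})"
    using assms by (intro sums_diff sums_If_finite_set) auto
  moreover have "(\<lambda>n. a n - (if n \<in> {..<M} then a n else 0)) = (\<lambda>n. if M \<le> n then a n else 0)"
    by (auto simp: fun_eq_iff)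
  ultimately show ?thesis by simp
qed

lemma truncation_suminf_tendsto_zero:
  fixes a :: "nat \<Rightarrow> 'a::real_normed_vector"
  assumes "summable a"
  shows "(\<lambda>M. \<Sum>n. if M \<le> n then a n else 0) \<longlonglongrightarrow> 0"
proof -
  have "(\<lambda>M. suminf a - sum a {..<M}) \<longlonglongrightarrow> suminf a - suminf a"
    using assms by (intro tendsto_diff tendsto_const summable_LIMSEQ)
  then show ?thesis
    using sums_unique[OF truncation_sums[OF assms]] by simp
qed

lemma summable_sq_norm_sum_le:
  fixes x :: "'i \<Rightarrow> nat \<Rightarrow> 'a::real_normed_vector"
  assumes "finite K" "\<And>k. k \<in> K \<Longrightarrow> summable (\<lambda>n. (norm (x k n))^2)"
  shows "summable (\<lambda>n. (norm (\<Sum>k\<in>K. x k n))^2)"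
    and "(\<Sum>n. (norm (\<Sum>k\<in>K. x k n))^2) \<le> card K * (\<Sum>k\<in>K. \<Sum>n. (norm (x k n))^2)"
proof -
  have pointwise: "(norm (\<Sum>k\<in>K. x k n))^2 \<le> card K * (\<Sum>k\<in>K. (norm (x k n))^2)" for n
  proof -
    have "(norm (\<Sum>k\<in>K. x k n))^2 \<le> (\<Sum>k\<in>K. norm (x k n))^2"
      by (intro power_mono norm_sum) simp
    also have "\<dots> \<le> card K * (\<Sum>k\<in>K. (norm (x k n))^2)"
      using sum_squared_le_sum_of_squares[of "\<lambda>k. norm (x k n)" K] by (simp add: mult.commute)
    finally show ?thesis .
  qed
  have bound: "summable (\<lambda>n. card K * (\<Sum>k\<in>K. (norm (x k n))^2))"
    using assms(2) by (intro summable_mult summable_sum)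
  show summable: "summable (\<lambda>n. (norm (\<Sum>k\<in>K. x k n))^2)"
    using pointwise by (intro summable_comparison_test'[OF bound]) simp
  have "(\<Sum>n. (norm (\<Sum>k\<in>K. x k n))^2) \<le> (\<Sum>n. card K * (\<Sum>k\<in>K. (norm (x k n))^2))"
    using pointwise summable bound by (rule suminf_le)
  also have "\<dots> = card K * (\<Sum>k\<in>K. \<Sum>n. (norm (x k n))^2)"
    using assms(2) by (simp add: suminf_mult suminf_sum summable_sum)
  finally show "(\<Sum>n. (norm (\<Sum>k\<in>K. x k n))^2) \<le> card K * (\<Sum>k\<in>K. \<Sum>n. (norm (x k n))^2)" .
qed

lemma summable_sq_norm_add_le:
  fixes a b :: "nat \<Rightarrow> 'a::real_normed_vector"
  assumes "summable (\<lambda>n. (norm (a n))^2)" "summable (\<lambda>n. (norm (b n))^2)"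
  shows "summable (\<lambda>n. (norm (a n + b n))^2)"
    and "(\<Sum>n. (norm (a n + b n))^2) \<le> 2 * (\<Sum>n. (norm (a n))^2) + 2 * (\<Sum>n. (norm (b n))^2)"
proof -
  define x where "x k = (if k then a else b)" for k
  have "(\<Sum>k\<in>UNIV. x k n) = a n + b n" for n
    by (simp add: x_def UNIV_bool)
  moreover have "summable (\<lambda>n. (norm (x k n))^2)" for k
    using assms by (simp add: x_def)
  ultimately show "summable (\<lambda>n. (norm (a n + b n))^2)"
    and "(\<Sum>n. (norm (a n + b n))^2) \<le> 2 * (\<Sum>n. (norm (a n))^2) + 2 * (\<Sum>n. (norm (b n))^2)"
    using summable_sq_norm_sum_le[of "UNIV :: bool set" x] by (simp_all add: x_def UNIV_bool algebra_simps)
qed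

section \<open>Ladder operators\<close>

lemma module_hom_Ldag: "module_hom (\<lambda>c f n. c * f n) (\<lambda>c f n. c * f n) (Ldag \<alpha>)"
  by (auto simp: module_hom_iff seq.module_axioms Ldag_def cre_def fun_eq_iff algebra_simps)

lemma ann_mult_left: "ann (\<lambda>n. h n * w n) = (\<lambda>n. h (Suc n) * ann w n)"
  unfolding ann_def by (simp add: fun_eq_iff algebra_simps)

lemma cre_mult_left: "cre (\<lambda>n. h n * w n) = (\<lambda>n. h (n - 1) * cre w n)"
  unfolding cre_def by (simp add: fun_eq_iff algebra_simps)

lemma ann_diff_scale: "ann (\<lambda>n. x n - c * y n) = (\<lambda>n. ann x n - c * ann y n)"
  unfolding ann_def by (simp add: fun_eq_iff algebra_simps)

lemma cre_diff_scale: "cre (\<lambda>n. x n - c * y n) = (\<lambda>n. cre x n - c * cre y n)"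
  unfolding cre_def by (simp add: fun_eq_iff algebra_simps)

lemma of_real_sqrt_of_nat_square: "complex_of_real (sqrt (real n)) * complex_of_real (sqrt (real n)) = of_nat n"
  by (simp flip: of_real_mult)

lemma ann_cre: "ann (cre v) = (\<lambda>n. of_nat (Suc n) * v n)"
  unfolding ann_def cre_def
  by (simp add: fun_eq_iff mult.assoc[symmetric] of_real_sqrt_of_nat_square del: of_nat_Suc)

lemma cre_ann: "cre (ann v) = (\<lambda>n. of_nat n * v n)"
  unfolding ann_def cre_def
  by (simp add: fun_eq_iff mult.assoc[symmetric] of_real_sqrt_of_nat_square)

lemma commL_eq: "commL \<alpha> v = (\<lambda>n. of_nat (4 * n + 2) * v n)"
proof
  fix n
  have "commL \<alpha> v n = ann (ann (cre (cre v))) n - cre (cre (ann (ann v))) n"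
    unfolding commL_def Lop_def Ldag_def by (simp add: ann_diff_scale cre_diff_scale) (simp add: algebra_simps)
  also have "\<dots> = (of_nat (Suc (Suc n)) * of_nat (Suc n) - of_nat (n - 1) * of_nat n) * v n"
    by (simp only: ann_cre cre_ann ann_mult_left cre_mult_left) (simp add: algebra_simps del: of_nat_Suc)
  also have "of_nat (Suc (Suc n)) * of_nat (Suc n) - of_nat (n - 1) * of_nat n = (of_nat (4 * n + 2) :: complex)"
    by (cases n) (simp_all add: algebra_simps)
  finally show "commL \<alpha> v n = of_nat (4 * n + 2) * v n" .
qed

section \<open>The coherent state\<close>

text \<open>The unnormalised coherent state \<open>e\<^bsup>\<alpha> a\<^sup>\<dagger>\<^esup>|0\<rangle> = e\<^bsup>\<alpha>\<^sup>2/2\<^esup>|\<alpha>\<rangle>\<close>.\<close>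
definition coh :: "real \<Rightarrow> nat \<Rightarrow> complex" where
  "coh \<alpha> n = of_real (\<alpha> ^ n / sqrt (fact n))"

lemma sqrt_fact_Suc: "sqrt (fact (Suc n)) = sqrt (real (Suc n)) * sqrt (fact n)"
  by (simp add: real_sqrt_mult del: of_nat_Suc)

lemma ann_coh: "ann (coh \<alpha>) = (\<lambda>n. of_real \<alpha> * coh \<alpha> n)"
proof
  fix n
  have "ann (coh \<alpha>) n = of_real (sqrt (real (Suc n)) * (\<alpha> ^ Suc n / sqrt (fact (Suc n))))"
    unfolding ann_def coh_def by (simp only: of_real_mult)
  also have "\<dots> = of_real (\<alpha> * (\<alpha> ^ n / sqrt (fact n)))"
    unfolding sqrt_fact_Suc by (simp del: of_nat_Suc)
  finally show "ann (coh \<alpha>) n = of_real \<alpha> * coh \<alpha> n"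
    unfolding coh_def by (simp only: of_real_mult)
qed

lemma coh_in_ell2: "coh \<alpha> \<in> ell2"
proof -
  have "(cmod (coh \<alpha> n))^2 = (\<alpha>^2)^n / fact n" for n
    unfolding coh_def norm_of_real power2_abs by (simp add: power_divide flip: power_mult) (simp add: mult.commute)
  then show ?thesis
    unfolding ell2_def using summable_exp[of "\<alpha>^2"] by (simp add: divide_inverse mult.commute)
qed

lemma coh_in_kerL: "coh \<alpha> \<in> kerL \<alpha>"
proof -
  have "ann (ann (coh \<alpha>)) = (\<lambda>n. of_real (\<alpha>^2) * coh \<alpha> n)"
    by (simp add: ann_coh ann_mult_left[where h="\<lambda>_. of_real \<alpha>"] power2_eq_square)
  then show ?thesis
    unfolding kerL_def Lop_def using coh_in_ell2 by simp
qed

lemma commL_coh: "commL \<alpha> (coh \<alpha>) = (\<lambda>n. 4 * of_real \<alpha> * cre (coh \<alpha>) n + 2 * coh \<alpha> n)"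
proof -
  have "of_nat n * coh \<alpha> n = of_real \<alpha> * cre (coh \<alpha>) n" for n
    using fun_cong[OF cre_ann[of "coh \<alpha>"], of n]
    by (simp add: ann_coh cre_mult_left[where h="\<lambda>_. of_real \<alpha>"])
  then show ?thesis
    unfolding commL_eq by (simp add: fun_eq_iff algebra_simps)
qed

lemma cre_pow_coh:
  "(cre ^^ k) (coh \<alpha>) n = (if k \<le> n then of_real (sqrt (fact n) * \<alpha> ^ (n - k) / fact (n - k)) else 0)"
proof (induction k arbitrary: n)
  case 0
  have "\<alpha> ^ n / sqrt (fact n) = sqrt (fact n) * \<alpha> ^ n / fact n"
    using real_div_sqrt[of "fact n"] by (simp add: field_simps)
  then show ?case by (simp add: coh_def del: of_real_divide of_real_mult of_real_power)
next
  case (Suc k)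
  show ?case
  proof (cases n)
    case (Suc m)
    then show ?thesis
      using Suc.IH[of m] by (simp add: cre_def real_sqrt_mult of_real_mult)
  qed (simp add: cre_def)
qed

lemma cre_pow_coh_in_span:
  assumes "\<alpha> \<noteq> 0" "Ldag \<alpha> ` S \<subseteq> S" "coh \<alpha> \<in> S" "commL \<alpha> (coh \<alpha>) \<in> S"
  shows "(cre ^^ k) (coh \<alpha>) \<in> seq.span S"
proof (induction k rule: nat_induct2)
  case 0
  then show ?case using assms(3) by (simp add: seq.span_base)
next
  case 1
  have "cre (coh \<alpha>) = (\<lambda>n. 1 / (4 * of_real \<alpha>) * commL \<alpha> (coh \<alpha>) n + (- 1 / (2 * of_real \<alpha>)) * coh \<alpha> n)"
    using assms(1) by (simp add: commL_coh fun_eq_iff field_simps)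
  also have "\<dots> \<in> seq.span S"
    using assms(3,4) by (intro span_scale_add seq.span_base)
  finally show ?case by simp
next
  case (step k)
  let ?v = "(cre ^^ k) (coh \<alpha>)"
  have "Ldag \<alpha> ?v \<in> seq.span S"
    using span_invariant[OF module_hom_Ldag assms(2)] step by blast
  then have "(\<lambda>n. 1 * Ldag \<alpha> ?v n + of_real (\<alpha>^2) * ?v n) \<in> seq.span S"
    using step by (intro span_scale_add)
  moreover have "(cre ^^ (k + 2)) (coh \<alpha>) = (\<lambda>n. 1 * Ldag \<alpha> ?v n + of_real (\<alpha>^2) * ?v n)"
    by (simp add: Ldag_def fun_eq_iff)
  ultimately show ?case by simp
qed

section \<open>Approximating the Fock basis\<close>

definition fock :: "nat \<Rightarrow> nat \<Rightarrow> complex" where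
  "fock m n = (if n = m then 1 else 0)"

text \<open>Partial sums of \<open>e\<^bsup>-\<alpha> a\<^sup>\<dagger>\<^esup> (a\<^sup>\<dagger>)\<^sup>m coh \<alpha> / \<surd>m! = (a\<^sup>\<dagger>)\<^sup>m |0\<rangle> / \<surd>m! = |m\<rangle>\<close>.\<close>
definition fock_approx :: "real \<Rightarrow> nat \<Rightarrow> nat \<Rightarrow> nat \<Rightarrow> complex" where
  "fock_approx \<alpha> m N =
     (\<lambda>n. \<Sum>k\<le>N. of_real ((- \<alpha>) ^ k / (fact k * sqrt (fact m))) * (cre ^^ (m + k)) (coh \<alpha>) n)"

lemma fock_approx_in_span:
  assumes "\<alpha> \<noteq> 0" "Ldag \<alpha> ` S \<subseteq> S" "coh \<alpha> \<in> S" "commL \<alpha> (coh \<alpha>) \<in> S"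
  shows "fock_approx \<alpha> m N \<in> seq.span S"
  unfolding fock_approx_def by (intro span_lincomb cre_pow_coh_in_span assms)

lemma alternating_choose_partial_sum:
  assumes "0 < j"
  shows "(\<Sum>k\<le>N. (- 1) ^ k * real (j choose k)) = (- 1) ^ N * real ((j - 1) choose N)"
  using gbinomial_sum_lower_neg[of "real j" N] assms
  by (simp add: binomial_gbinomial of_nat_diff mult.commute)

lemma fock_approx_apply:
  "fock_approx \<alpha> m N n = (if m \<le> n then of_real (sqrt (fact n) / sqrt (fact m) * \<alpha> ^ (n - m) / fact (n - m)
      * (\<Sum>k\<le>N. (- 1) ^ k * real ((n - m) choose k))) else 0)"
proof (cases "m \<le> n")
  case True
  define j where "j = n - m"
  define A where "A = sqrt (fact n) / sqrt (fact m) * \<alpha> ^ j / fact j"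
  have summand: "(- \<alpha>) ^ k / (fact k * sqrt (fact m)) * (if m + k \<le> n then sqrt (fact n) * \<alpha> ^ (n - (m + k)) / fact (n - (m + k)) else 0)
      = A * ((- 1) ^ k * real (j choose k))" for k
  proof (cases "k \<le> j")
    case True
    have "\<alpha> ^ j = \<alpha> ^ k * \<alpha> ^ (j - k)" using True by (simp flip: power_add)
    moreover have "real (j choose k) = fact j / (fact k * fact (j - k))" using binomial_fact[OF True] by simp
    moreover have "(- \<alpha>) ^ k = (- 1) ^ k * \<alpha> ^ k" by (simp flip: power_mult_distrib)
    moreover have "m + k \<le> n" "n - (m + k) = j - k" using True \<open>m \<le> n\<close> by (auto simp: j_def)
    ultimately show ?thesis by (simp add: A_def field_simps)
  qed (auto simp: j_def)
  have "fock_approx \<alpha> m N n = of_real (\<Sum>k\<le>N. (- \<alpha>) ^ k / (fact k * sqrt (fact m))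
      * (if m + k \<le> n then sqrt (fact n) * \<alpha> ^ (n - (m + k)) / fact (n - (m + k)) else 0))"
    unfolding fock_approx_def cre_pow_coh of_real_sum by (intro sum.cong) auto
  also have "\<dots> = of_real (A * (\<Sum>k\<le>N. (- 1) ^ k * real (j choose k)))"
    by (simp only: summand sum_distrib_left)
  finally show ?thesis
    using True by (simp add: A_def j_def)
qed (auto simp: fock_approx_def cre_pow_coh)

lemma fact_add_le_pow2_mult_fact: "fact (m + j) \<le> (2 ^ (m + j) * fact m * fact j :: real)"
proof -
  have "fact (m + j) / (fact m * fact j) = real ((m + j) choose m)"
    using binomial_fact[of m "m + j", where 'a=real] by simp
  also have "\<dots> \<le> 2 ^ (m + j)"
    using binomial_le_pow2[of "m + j" m] by (metis of_nat_le_iff of_nat_numeral of_nat_power)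
  finally show ?thesis by (simp add: field_simps)
qed

lemma fock_coeff_sq_le:
  "(sqrt (fact (m + j)) / sqrt (fact m) * \<alpha> ^ j / fact j)^2 * 4 ^ j \<le> 2 ^ m * (8 * \<alpha>^2) ^ j / fact j"
proof -
  have "(sqrt (fact (m + j)) / sqrt (fact m) * \<alpha> ^ j / fact j)^2 * 4 ^ j
      = fact (m + j) / fact m * (\<alpha>^2) ^ j / fact j ^ 2 * 4 ^ j"
    by (simp add: power_divide power_mult_distrib flip: power_mult) (simp add: mult.commute)
  also have "\<dots> \<le> 2 ^ (m + j) * fact j * (\<alpha>^2) ^ j / fact j ^ 2 * 4 ^ j"
    using fact_add_le_pow2_mult_fact[of m j]
    by (intro mult_right_mono divide_right_mono) (simp_all add: pos_divide_le_eq mult.commute mult.left_commute)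
  also have "\<dots> = 2 ^ m * (8 * \<alpha>^2) ^ j / fact j"
    by (simp add: power2_eq_square power_add field_simps flip: power_mult_distrib)
  finally show ?thesis .
qed

lemma fock_approx_error_le:
  "(cmod (fock m n - fock_approx \<alpha> m N n))^2
     \<le> (if N < n \<and> m \<le> n then 2 ^ m * (8 * \<alpha>^2) ^ (n - m) / fact (n - m) else 0)"
proof (cases "m < n")
  case False
  have "(\<Sum>k\<le>N. (- 1) ^ k * real (0 choose k)) = 1"
    by (cases N) (simp_all add: sum.atMost_shift)
  with False have "fock m n = fock_approx \<alpha> m N n"
    by (cases "m = n") (simp_all add: fock_def fock_approx_apply)
  then show ?thesis by simp
next
  case True
  define j where "j = n - m"
  define A where "A = sqrt (fact n) / sqrt (fact m) * \<alpha> ^ j / fact j"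
  have j: "0 < j" "n = m + j" using True by (auto simp: j_def)
  have "fock_approx \<alpha> m N n = of_real (A * ((- 1) ^ N * real ((j - 1) choose N)))"
    using True unfolding fock_approx_apply j_def[symmetric] alternating_choose_partial_sum[OF j(1)]
    by (simp add: A_def)
  then have "(cmod (fock m n - fock_approx \<alpha> m N n))^2 = A^2 * real ((j - 1) choose N) ^ 2"
    using True by (simp add: fock_def norm_mult norm_power power_mult_distrib)
  also have "\<dots> \<le> (if N < n \<and> m \<le> n then 2 ^ m * (8 * \<alpha>^2) ^ (n - m) / fact (n - m) else 0)"
  proof (cases "N < j")
    case False
    then show ?thesis using j by (simp add: binomial_eq_0)
  next
    case True
    have "(j - 1) choose N \<le> 2 ^ j"
      using binomial_le_pow2[of "j - 1" N] by (meson diff_le_self order_trans one_le_numeral power_increasing)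
    then have "real ((j - 1) choose N) ^ 2 \<le> 4 ^ j"
      using power_mono[of "real ((j - 1) choose N)" "2 ^ j" 2]
      by (simp add: of_nat_le_iff of_nat_numeral of_nat_power power2_eq_square flip: power_mult_distrib)
    then have "A^2 * real ((j - 1) choose N) ^ 2 \<le> A^2 * 4 ^ j"
      by (intro mult_left_mono) simp_all
    also have "\<dots> \<le> 2 ^ m * (8 * \<alpha>^2) ^ j / fact j"
      using fock_coeff_sq_le[of m j \<alpha>] j(2) by (simp add: A_def mult.commute)
    finally show ?thesis using True j(2) by simp
  qed
  finally show ?thesis .
qed

lemma fock_approx_converges:
  shows "summable (\<lambda>n. (cmod (fock m n - fock_approx \<alpha> m N n))^2)"
    and "(\<lambda>N. \<Sum>n. (cmod (fock m n - fock_approx \<alpha> m N n))^2) \<longlonglongrightarrow> 0"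
proof -
  define e where "e n = (if m \<le> n then 2 ^ m * (8 * \<alpha>^2) ^ (n - m) / fact (n - m) else 0)" for n
  have "summable (\<lambda>n. e (n + m))"
    using summable_mult[OF summable_exp[of "8 * \<alpha>^2"], of "2 ^ m"]
    by (simp add: e_def divide_inverse mult_ac)
  then have e: "summable e"
    by simp
  have bound: "(cmod (fock m n - fock_approx \<alpha> m N n))^2 \<le> (if Suc N \<le> n then e n else 0)" for N n
    using fock_approx_error_le[of m n \<alpha> N] by (auto simp: e_def Suc_le_eq simp del: norm_le_zero_iff split: if_split_asm)
  have tail: "summable (\<lambda>n. if Suc N \<le> n then e n else 0)" for N
    using truncation_sums[OF e] by (rule sums_summable)
  show summable: "summable (\<lambda>n. (cmod (fock m n - fock_approx \<alpha> m N n))^2)" for N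
    by (rule summable_comparison_test'[OF tail[of N], where N=0]) (use bound in simp)
  have tail_lim: "(\<lambda>N. \<Sum>n. if Suc N \<le> n then e n else 0) \<longlonglongrightarrow> 0"
    using LIMSEQ_Suc[OF truncation_suminf_tendsto_zero[OF e]] .
  show "(\<lambda>N. \<Sum>n. (cmod (fock m n - fock_approx \<alpha> m N n))^2) \<longlonglongrightarrow> 0"
    by (rule tendsto_sandwich[OF _ _ tendsto_const tail_lim])
       (simp_all add: suminf_nonneg suminf_le bound summable tail)
qed

lemma fock_expansion_error_le:
  fixes f :: "nat \<Rightarrow> complex" and g :: "nat \<Rightarrow> nat \<Rightarrow> complex" and M :: nat
  assumes f: "summable (\<lambda>n. (cmod (f n))^2)"
    and g: "\<And>m. summable (\<lambda>n. (cmod (fock m n - g m n))^2)"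
  defines "G \<equiv> \<lambda>n. \<Sum>m<M. f m * g m n"
  shows "summable (\<lambda>n. (cmod (f n - G n))^2)"
    and "(\<Sum>n. (cmod (f n - G n))^2) \<le> 2 * (\<Sum>n. if M \<le> n then (cmod (f n))^2 else 0)
           + 2 * (M * (\<Sum>m<M. (cmod (f m))^2 * (\<Sum>n. (cmod (fock m n - g m n))^2)))"
proof -
  define tail where "tail n = (if M \<le> n then f n else 0)" for n
  define R where "R n = (\<Sum>m<M. f m * (fock m n - g m n))" for n
  have decomp: "f n - G n = tail n + R n" for n
  proof -
    have "(\<Sum>m<M. f m * fock m n) = (\<Sum>m<M. if n = m then f m else 0)"
      by (intro sum.cong) (simp_all add: fock_def)
    then show ?thesis
      by (simp add: G_def R_def tail_def right_diff_distrib sum_subtractf)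
  qed
  have sq_tail: "(cmod (tail n))^2 = (if M \<le> n then (cmod (f n))^2 else 0)" for n
    by (simp add: tail_def)
  have tail: "summable (\<lambda>n. (cmod (tail n))^2)"
    unfolding sq_tail using truncation_sums[OF f] by (rule sums_summable)
  have "summable (\<lambda>n. (cmod (f m * (fock m n - g m n)))^2)" for m
    using summable_mult[OF g[of m], of "(cmod (f m))^2"] by (simp add: norm_mult power_mult_distrib)
  moreover have "(\<Sum>n. (cmod (f m * (fock m n - g m n)))^2) = (cmod (f m))^2 * (\<Sum>n. (cmod (fock m n - g m n))^2)" for m
    using suminf_mult[OF g[of m], of "(cmod (f m))^2"] by (simp add: norm_mult power_mult_distrib)
  ultimately have R: "summable (\<lambda>n. (cmod (R n))^2)"
      "(\<Sum>n. (cmod (R n))^2) \<le> M * (\<Sum>m<M. (cmod (f m))^2 * (\<Sum>n. (cmod (fock m n - g m n))^2))"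
    unfolding R_def using summable_sq_norm_sum_le[of "{..<M}" "\<lambda>m n. f m * (fock m n - g m n)"] by simp_all
  show "summable (\<lambda>n. (cmod (f n - G n))^2)"
    unfolding decomp by (rule summable_sq_norm_add_le(1)[OF tail R(1)])
  show "(\<Sum>n. (cmod (f n - G n))^2) \<le> 2 * (\<Sum>n. if M \<le> n then (cmod (f n))^2 else 0)
           + 2 * (M * (\<Sum>m<M. (cmod (f m))^2 * (\<Sum>n. (cmod (fock m n - g m n))^2)))"
    using summable_sq_norm_add_le(2)[OF tail R(1)] R(2) unfolding decomp sq_tail by linarith
qed

lemma dense_ell2_if_fock_limits:
  fixes g :: "nat \<Rightarrow> nat \<Rightarrow> nat \<Rightarrow> complex"
  assumes D: "seq.subspace D" "\<And>m N. g m N \<in> D"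
    and summable: "\<And>m N. summable (\<lambda>n. (cmod (fock m n - g m N n))^2)"
    and lim: "\<And>m. (\<lambda>N. \<Sum>n. (cmod (fock m n - g m N n))^2) \<longlonglongrightarrow> 0"
  shows "dense_ell2 D"
  unfolding dense_ell2_def
proof (intro ballI allI impI)
  fix f :: "nat \<Rightarrow> complex" and \<epsilon> :: real
  assume "f \<in> ell2" "0 < \<epsilon>"
  then have f: "summable (\<lambda>n. (cmod (f n))^2)"
    by (simp add: ell2_def)
  have tail_lim: "(\<lambda>M. \<Sum>n. if M \<le> n then (cmod (f n))^2 else 0) \<longlonglongrightarrow> 0"
    by (rule truncation_suminf_tendsto_zero[OF f])
  obtain M where M: "(\<Sum>n. if M \<le> n then (cmod (f n))^2 else 0) < \<epsilon> / 4"
    using eventually_happens'[OF sequentially_bot order_tendstoD(2)[OF tail_lim, of "\<epsilon> / 4"]] \<open>0 < \<epsilon>\<close>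
    by auto
  have error_lim: "(\<lambda>N. 2 * (M * (\<Sum>m<M. (cmod (f m))^2 * (\<Sum>n. (cmod (fock m n - g m N n))^2)))) \<longlonglongrightarrow> 0"
    by (intro tendsto_mult_right_zero tendsto_null_sum lim)
  obtain N where N: "2 * (M * (\<Sum>m<M. (cmod (f m))^2 * (\<Sum>n. (cmod (fock m n - g m N n))^2))) < \<epsilon> / 2"
    using eventually_happens'[OF sequentially_bot order_tendstoD(2)[OF error_lim, of "\<epsilon> / 2"]] \<open>0 < \<epsilon>\<close>
    by auto
  have "(\<lambda>n. \<Sum>m<M. f m * g m N n) = (\<Sum>m<M. (\<lambda>n. f m * g m N n))"
    by (simp add: sum_fun_apply fun_eq_iff)
  then have "(\<lambda>n. \<Sum>m<M. f m * g m N n) \<in> D"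
    using D by (simp add: seq.subspace_sum seq.subspace_scale)
  moreover note fock_expansion_error_le[OF f summable[of _ N], of M]
  ultimately show "\<exists>g\<in>D. summable (\<lambda>n. (cmod (f n - g n))^2) \<and> (\<Sum>n. (cmod (f n - g n))^2) < \<epsilon>"
    using M N by force
qed

theorem lemma8:
  fixes \<alpha> :: real
  assumes "\<alpha> \<noteq> 0"
  shows "dense_ell2 (setsum_fun (Ea \<alpha>) (Esharp \<alpha>))"
proof -
  define A where "A = {(Ldag \<alpha> ^^ j) v |j v. v \<in> kerL \<alpha>}"
  define B where "B = {(Ldag \<alpha> ^^ j) (commL \<alpha> v) |j v. v \<in> kerL \<alpha>}"
  have "Ldag \<alpha> ((Ldag \<alpha> ^^ j) w) = (Ldag \<alpha> ^^ Suc j) w" for j w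
    by simp
  then have invariant: "Ldag \<alpha> ` (A \<union> B) \<subseteq> A \<union> B"
    unfolding A_def B_def by (auto simp del: funpow.simps)
  have coh: "coh \<alpha> \<in> A \<union> B" "commL \<alpha> (coh \<alpha>) \<in> A \<union> B"
    unfolding A_def B_def using coh_in_kerL[of \<alpha>] by (auto intro!: exI[of _ "0::nat"])
  have "dense_ell2 (seq.span (A \<union> B))"
    by (rule dense_ell2_if_fock_limits[where g = "fock_approx \<alpha>"])
       (simp_all add: fock_approx_in_span[OF assms invariant coh] fock_approx_converges)
  then show ?thesis
    by (simp add: Ea_def Esharp_def cspan_eq_span setsum_fun_span flip: A_def B_def)
qed

end
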